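(* Let $n\ge 2$, let $A$ be a Hermitian matrix of order $n$ and let $\mathcal{O}\in\mathcal{C}_c^{(n)}$. Suppose $A'$ is obtained from $A$ by applying one cycle ($N=n(n-1)/2$ steps) of the cyclic complex Jacobi method defined by the strategy $I_{\mathcal{O}}$. If all rotation angles satisfy $|\cos\phi_k|\ge\nu>0$, $k\ge 0$, then there is a constant $\gamma_{n,\nu}$ depending only on $n$ and $\nu$ such that $$S^2(A')\le\gamma_{n,\nu}S^2(A),\qquad 0\le\gamma_{n,\nu}<1.$$
   Context: $\imath=\sqrt{-1}$. For $1\le i<j\le n$ and real $\phi,\alpha$, $R(i,j,\phi,\alpha)$ is the $n\times n$ matrix equal to $I_n$ except for entries $(i,i)=(j,j)=\cos\phi$, $(i,j)=-e^{\imath\alpha}\sin\phi$, $(j,i)=e^{-\imath\alpha}\sin\phi$. The off-norm is $S(X)=\|X-\mathrm{diag}(X)\|_F$. The complex Jacobi method on a Hermitian $A$ is the iteration $A^{(0)}=A$, $A^{(k+1)}=U_k^*A^{(k)}U_k$, where $U_k=R(i_k,j_k,\phi_k,\alpha_k)$ and the angles $\phi_k,\alpha_k$ are chosen so that the pivot entry in position $(i_k,j_k)$ (and hence $(j_k,i_k)$) of $A^{(k+1)}$ is zero. Let $\mathcal{P}_n=\{(r,s):1\le r<s\le n\}$ and $N=n(n-1)/2$. For an ordering $\mathcal{O}=(i_0,j_0),\dots,(i_{N-1},j_{N-1})$ of $\mathcal{P}_n$ (each pair appearing exactly once), the cyclic strategy $I_{\mathcal{O}}$ takes as $k$-th pivot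 pair $(i_{k\bmod N},j_{k\bmod N})$; one cycle consists of $N$ consecutive steps. $\mathcal{C}_c^{(n)}$ (column-wise orderings with permutations) is the set of orderings of the form $(1,2),(\tau_3(1),3),(\tau_3(2),3),\dots,(\tau_n(1),n),\dots,(\tau_n(n-1),n)$, where each $\tau_j$ is a permutation of $\{1,\dots,j-1\}$, $3\le j\le n$. *)

theory Defs
  imports "HOL-Analysis.Analysis" "HOL-Combinatorics.Permutations"
begin

text \<open>Matrices of order n are represented as functions nat => nat => complex,
  with (1-based) indices ranging over {1..n}; entries outside are irrelevant.\<close>

type_synonym cmatrix = "nat \<Rightarrow> nat \<Rightarrow> complex"

definition mmult :: "nat \<Rightarrow> cmatrix \<Rightarrow> cmatrix \<Rightarrow> cmatrix" where
  "mmult n X Y = (\<lambda>r c. \<Sum>k=1..n. X r k * Y k c)"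

definition cadj :: "cmatrix \<Rightarrow> cmatrix" where
  "cadj X = (\<lambda>r c. cnj (X c r))"

definition hermitian :: "nat \<Rightarrow> cmatrix \<Rightarrow> bool" where
  "hermitian n X \<longleftrightarrow> (\<forall>r\<in>{1..n}. \<forall>c\<in>{1..n}. X r c = cnj (X c r))"

definition rot :: "nat \<Rightarrow> nat \<Rightarrow> real \<Rightarrow> real \<Rightarrow> cmatrix" where
  "rot i j \<phi> \<alpha> = (\<lambda>r c.
     if (r = i \<and> c = i) \<or> (r = j \<and> c = j) then complex_of_real (cos \<phi>)
     else if r = i \<and> c = j then - exp (\<i> * complex_of_real \<alpha>) * complex_of_real (sin \<phi>)
     else if r = j \<and> c = i then exp (- \<i> * complex_of_real \<alpha>) * complex_of_real (sin \<phi>)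
     else if r = c then 1 else 0)"

definition off_norm :: "nat \<Rightarrow> cmatrix \<Rightarrow> real" where
  "off_norm n X = sqrt (\<Sum>r=1..n. \<Sum>c=1..n. if r \<noteq> c then (cmod (X r c))\<^sup>2 else 0)"

definition col_orderings :: "nat \<Rightarrow> (nat \<times> nat) list set" where
  "col_orderings n = {(1,2) # concat (map (\<lambda>j. map (\<lambda>i. (\<tau> j i, j)) [1..<j]) [3..<Suc n]) | \<tau>.
      \<forall>j\<in>{3..n}. \<tau> j permutes {1..<j}}"

definition jacobi_one_cycle ::
  "nat \<Rightarrow> (nat \<times> nat) list \<Rightarrow> real \<Rightarrow> cmatrix \<Rightarrow> cmatrix \<Rightarrow> bool" where
  "jacobi_one_cycle n ord \<nu> A A' \<longleftrightarrow>
     (\<exists>As :: nat \<Rightarrow> cmatrix. \<exists>\<phi> \<alpha> :: nat \<Rightarrow> real.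
        As 0 = A \<and>
        (\<forall>k < n * (n - 1) div 2.
           (let U = rot (fst (ord ! k)) (snd (ord ! k)) (\<phi> k) (\<alpha> k) in
              As (Suc k) = mmult n (cadj U) (mmult n (As k) U)) \<and>
           As (Suc k) (fst (ord ! k)) (snd (ord ! k)) = 0 \<and>
           \<bar>cos (\<phi> k)\<bar> \<ge> \<nu>) \<and>
        A' = As (n * (n - 1) div 2))"

end

theory Submission
  imports Defs
begin

text \<open>Group the \<open>N\<close> steps into phases: phase \<open>m\<close> (\<open>1 \<le> m < n\<close>) consists of the \<open>m\<close>
  rotations annihilating the part of column \<open>m + 1\<close> above the diagonal. Earlier phases only
  rotate rows \<open>1, ..., m\<close>, so they preserve the norm of that part of the column. By induction
  on \<open>m\<close>, after the phases before \<open>m\<close> the squared off-norm of the leading block of order \<open>m\<close>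
  has shrunk by a factor \<open>1 - \<delta>\<^sub>m\<close>, where \<open>\<delta>\<^sub>m = sweep_gap \<nu> m\<close>. During phase \<open>m\<close> the
  squared off-norm of the block of order \<open>m + 1\<close> drops by exactly twice the sum \<open>P\<close> of the
  squared pivots. Because \<open>|cos \<phi>| \<ge> \<nu>\<close>, each pivot is at least \<open>\<nu>\<^sup>m\<close> times the
  corresponding entry of column \<open>m + 1\<close> at the start of the phase, up to at most \<open>m\<close> entries
  of the block of order \<open>m\<close>. Hence either \<open>P\<close> is a fixed fraction of that column or the block
  of order \<open>m\<close> is large, and both alternatives yield the contraction
  \<open>\<delta>\<^sub>m\<^sub>+\<^sub>1 = \<delta>\<^sub>m \<nu>\<^sup>2\<^sup>m / (8 m\<^sup>3)\<close>.\<close>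

section \<open>Entries of a matrix transformed by a rotation\<close>

lemma sum_if_two_points:
  assumes "finite S" "i \<in> S" "j \<in> S" "i \<noteq> j"
  shows "(\<Sum>l\<in>S. if l = i then a else if l = j then b else 0) = a + (b :: 'a :: comm_monoid_add)"
proof -
  have "(\<Sum>l\<in>S. if l = i then a else if l = j then b else 0)
      = (\<Sum>l\<in>S. (if l = i then a else 0) + (if l = j then b else 0))"
    using assms(4) by (intro sum.cong) auto
  also have "\<dots> = a + b"
    using assms(1-3) by (simp add: sum.distrib)
  finally show ?thesis .
qed

lemma mmult_rot_other:
  assumes "b \<in> {1..n}" "b \<noteq> i" "b \<noteq> j"
  shows "mmult n X (rot i j \<phi> \<alpha>) r b = X r b"
proof -
  have "mmult n X (rot i j \<phi> \<alpha>) r b = (\<Sum>l=1..n. if l = b then X r b else 0)"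
    unfolding mmult_def by (rule sum.cong) (use assms in \<open>auto simp: rot_def\<close>)
  then show ?thesis
    using assms(1) by simp
qed

lemma mmult_rot_i:
  assumes "i \<in> {1..n}" "j \<in> {1..n}" "i \<noteq> j"
  shows "mmult n X (rot i j \<phi> \<alpha>) r i
    = of_real (cos \<phi>) * X r i + exp (- \<i> * \<alpha>) * of_real (sin \<phi>) * X r j" (is "_ = ?rhs")
proof -
  have "mmult n X (rot i j \<phi> \<alpha>) r i = (\<Sum>l=1..n. if l = i then of_real (cos \<phi>) * X r i
      else if l = j then exp (- \<i> * \<alpha>) * of_real (sin \<phi>) * X r j else 0)"
    unfolding mmult_def by (rule sum.cong) (use assms in \<open>auto simp: rot_def\<close>)
  also have "\<dots> = ?rhs"
    by (rule sum_if_two_points) (use assms in auto)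
  finally show ?thesis .
qed

lemma mmult_rot_j:
  assumes "i \<in> {1..n}" "j \<in> {1..n}" "i \<noteq> j"
  shows "mmult n X (rot i j \<phi> \<alpha>) r j
    = - exp (\<i> * \<alpha>) * of_real (sin \<phi>) * X r i + of_real (cos \<phi>) * X r j" (is "_ = ?rhs")
proof -
  have "mmult n X (rot i j \<phi> \<alpha>) r j = (\<Sum>l=1..n. if l = i then - exp (\<i> * \<alpha>) * of_real (sin \<phi>) * X r i
      else if l = j then of_real (cos \<phi>) * X r j else 0)"
    unfolding mmult_def by (rule sum.cong) (use assms in \<open>auto simp: rot_def\<close>)
  also have "\<dots> = ?rhs"
    by (rule sum_if_two_points) (use assms in auto)
  finally show ?thesis .
qed

lemma mmult_adj_rot_other:
  assumes "r \<in> {1..n}" "r \<noteq> i" "r \<noteq> j"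
  shows "mmult n (cadj (rot i j \<phi> \<alpha>)) Y r b = Y r b"
proof -
  have "mmult n (cadj (rot i j \<phi> \<alpha>)) Y r b = (\<Sum>l=1..n. if l = r then Y r b else 0)"
    unfolding mmult_def by (rule sum.cong) (use assms in \<open>auto simp: rot_def cadj_def\<close>)
  then show ?thesis
    using assms(1) by simp
qed

lemma mmult_adj_rot_i:
  assumes "i \<in> {1..n}" "j \<in> {1..n}" "i \<noteq> j"
  shows "mmult n (cadj (rot i j \<phi> \<alpha>)) Y i b
    = of_real (cos \<phi>) * Y i b + exp (\<i> * \<alpha>) * of_real (sin \<phi>) * Y j b" (is "_ = ?rhs")
proof -
  have "mmult n (cadj (rot i j \<phi> \<alpha>)) Y i b = (\<Sum>l=1..n. if l = i then of_real (cos \<phi>) * Y i b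
      else if l = j then exp (\<i> * \<alpha>) * of_real (sin \<phi>) * Y j b else 0)"
    unfolding mmult_def
    by (rule sum.cong) (use assms in \<open>auto simp: rot_def cadj_def exp_cnj\<close>)
  also have "\<dots> = ?rhs"
    by (rule sum_if_two_points) (use assms in auto)
  finally show ?thesis .
qed

lemma mmult_adj_rot_j:
  assumes "i \<in> {1..n}" "j \<in> {1..n}" "i \<noteq> j"
  shows "mmult n (cadj (rot i j \<phi> \<alpha>)) Y j b
    = - exp (- \<i> * \<alpha>) * of_real (sin \<phi>) * Y i b + of_real (cos \<phi>) * Y j b" (is "_ = ?rhs")
proof -
  have "mmult n (cadj (rot i j \<phi> \<alpha>)) Y j b = (\<Sum>l=1..n. if l = i then - exp (- \<i> * \<alpha>) * of_real (sin \<phi>) * Y i b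
      else if l = j then of_real (cos \<phi>) * Y j b else 0)"
    unfolding mmult_def
    by (rule sum.cong) (use assms in \<open>auto simp: rot_def cadj_def exp_cnj\<close>)
  also have "\<dots> = ?rhs"
    by (rule sum_if_two_points) (use assms in auto)
  finally show ?thesis .
qed

lemma unitary_pair_norm:
  fixes x y w :: complex and c s :: real
  assumes "c\<^sup>2 + s\<^sup>2 = 1" "cmod w = 1"
  shows "(cmod (c * x + cnj w * s * y))\<^sup>2 + (cmod (- w * s * x + c * y))\<^sup>2
       = (cmod x)\<^sup>2 + (cmod y)\<^sup>2"
proof -
  have w: "w * cnj w = 1"
    using assms(2) complex_norm_square[of w] by simp
  have w': "w * (z * (cnj w * t)) = z * t" for z t
    by (metis w mult.assoc mult.commute mult.left_commute mult_1)
  have cs: "(complex_of_real c)\<^sup>2 + (complex_of_real s)\<^sup>2 = 1"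
    using assms(1) by (metis of_real_1 of_real_add of_real_power)
  have "complex_of_real ((cmod (c * x + cnj w * s * y))\<^sup>2 + (cmod (- w * s * x + c * y))\<^sup>2)
     = (c * x + cnj w * s * y) * cnj (c * x + cnj w * s * y)
       + (- w * s * x + c * y) * cnj (- w * s * x + c * y)"
    by (simp only: of_real_add complex_norm_square)
  also have "\<dots> = ((of_real c)\<^sup>2 + (of_real s)\<^sup>2) * (x * cnj x)
      + ((of_real c)\<^sup>2 + (of_real s)\<^sup>2 * (w * cnj w)) * (y * cnj y)"
    by (simp add: algebra_simps power2_eq_square w w')
  also have "\<dots> = complex_of_real ((cmod x)\<^sup>2 + (cmod y)\<^sup>2)"
    by (simp only: cs w mult_1_right mult_1_left of_real_add complex_norm_square)
  finally show ?thesis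
    using of_real_eq_iff by blast
qed

lemma rot_pair_norm_right:
  fixes x y :: complex and \<phi> \<alpha> :: real
  shows "(cmod (of_real (cos \<phi>) * x + exp (- \<i> * \<alpha>) * of_real (sin \<phi>) * y))\<^sup>2
   + (cmod (- exp (\<i> * \<alpha>) * of_real (sin \<phi>) * x + of_real (cos \<phi>) * y))\<^sup>2
   = (cmod x)\<^sup>2 + (cmod y)\<^sup>2"
  using unitary_pair_norm[of "cos \<phi>" "sin \<phi>" "exp (\<i> * \<alpha>)" x y]
  by (simp add: exp_cnj norm_exp_i_times)

lemma rot_pair_norm_left:
  fixes x y :: complex and \<phi> \<alpha> :: real
  shows "(cmod (of_real (cos \<phi>) * x + exp (\<i> * \<alpha>) * of_real (sin \<phi>) * y))\<^sup>2
   + (cmod (- exp (- \<i> * \<alpha>) * of_real (sin \<phi>) * x + of_real (cos \<phi>) * y))\<^sup>2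
   = (cmod x)\<^sup>2 + (cmod y)\<^sup>2"
  using unitary_pair_norm[of "cos \<phi>" "sin \<phi>" "exp (- \<i> * \<alpha>)" x y] norm_exp_i_times[of "- \<alpha>"]
  by (simp add: exp_cnj)

lemma rot_entry_lower_bound:
  fixes x y :: complex and c s \<alpha> \<nu> :: real
  assumes "\<nu> \<le> \<bar>c\<bar>" "\<bar>s\<bar> \<le> 1"
  shows "\<nu> * cmod y - cmod x \<le> cmod (- exp (\<i> * \<alpha>) * s * x + c * y)"
proof -
  let ?w = "- exp (\<i> * \<alpha>) * s * x + c * y"
  have "cmod (c * y) \<le> cmod ?w + cmod (exp (\<i> * \<alpha>) * s * x)"
    using norm_triangle_ineq[of ?w "exp (\<i> * \<alpha>) * s * x"] by simp
  moreover have "cmod (exp (\<i> * \<alpha>) * s * x) \<le> cmod x"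
    using assms(2) by (simp add: norm_mult norm_exp_i_times mult_left_le_one_le)
  moreover have "\<nu> * cmod y \<le> cmod (c * y)"
    using assms(1) by (simp add: norm_mult mult_right_mono)
  ultimately show ?thesis
    by linarith
qed

lemma hermitian_congruence:
  assumes "hermitian n X"
  shows "hermitian n (mmult n (cadj U) (mmult n X U))"
  unfolding hermitian_def
proof (intro ballI)
  fix r c assume "r \<in> {1..n}" "c \<in> {1..n}"
  have "cnj (mmult n (cadj U) (mmult n X U) c r)
      = (\<Sum>k=1..n. \<Sum>l=1..n. U k c * (cnj (X k l) * cnj (U l r)))"
    by (simp add: mmult_def cadj_def sum_distrib_left)
  also have "\<dots> = (\<Sum>k=1..n. \<Sum>l=1..n. U k c * (X l k * cnj (U l r)))"
    using assms unfolding hermitian_def by (intro sum.cong refl) (metis complex_cnj_cnj)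
  also have "\<dots> = (\<Sum>l=1..n. \<Sum>k=1..n. U k c * (X l k * cnj (U l r)))"
    by (rule sum.swap)
  also have "\<dots> = mmult n (cadj U) (mmult n X U) r c"
    by (simp add: mmult_def cadj_def sum_distrib_left algebra_simps)
  finally show "mmult n (cadj U) (mmult n X U) r c = cnj (mmult n (cadj U) (mmult n X U) c r)"
    by simp
qed

lemma hermitian_cmod_sym:
  "hermitian n X \<Longrightarrow> r \<in> {1..n} \<Longrightarrow> c \<in> {1..n} \<Longrightarrow> cmod (X r c) = cmod (X c r)"
  unfolding hermitian_def by (metis complex_mod_cnj)

section \<open>Off-norms of leading principal blocks\<close>

definition off_block :: "nat \<Rightarrow> cmatrix \<Rightarrow> real" where
  "off_block m X = (\<Sum>r=1..m. \<Sum>c=1..m. if r \<noteq> c then (cmod (X r c))\<^sup>2 else 0)"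

definition col_above :: "nat \<Rightarrow> cmatrix \<Rightarrow> real" where
  "col_above J X = (\<Sum>r=1..<J. (cmod (X r J))\<^sup>2)"

lemma off_norm_sq: "(off_norm n X)\<^sup>2 = off_block n X"
  unfolding off_norm_def off_block_def by (simp add: sum_nonneg)

lemma off_block_nonneg: "0 \<le> off_block m X"
  unfolding off_block_def by (intro sum_nonneg) auto

lemma col_above_nonneg: "0 \<le> col_above J X"
  unfolding col_above_def by (intro sum_nonneg) auto

lemma cmod_le_sqrt_off_block:
  assumes "r \<in> {1..m}" "c \<in> {1..m}" "r \<noteq> c"
  shows "cmod (X r c) \<le> sqrt (off_block m X)"
proof -
  let ?row = "\<lambda>r. \<Sum>c=1..m. if r \<noteq> c then (cmod (X r c))\<^sup>2 else 0"
  have "(cmod (X r c))\<^sup>2 \<le> ?row r"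
    using assms member_le_sum[of c "{1..m}" "\<lambda>c. if r \<noteq> c then (cmod (X r c))\<^sup>2 else 0"]
    by auto
  also have "\<dots> \<le> off_block m X"
    unfolding off_block_def using assms by (intro member_le_sum) (auto intro: sum_nonneg)
  finally show ?thesis
    by (simp add: real_le_rsqrt)
qed

lemma off_block_Suc:
  assumes "hermitian n X" "Suc m \<le> n"
  shows "off_block (Suc m) X = off_block m X + 2 * col_above (Suc m) X"
proof -
  have sym: "cmod (X (Suc m) r) = cmod (X r (Suc m))" if "r \<in> {1..m}" for r
    using hermitian_cmod_sym[OF assms(1)] that assms(2) by simp
  have "off_block (Suc m) X
      = (\<Sum>r=1..m. (\<Sum>c=1..m. if r \<noteq> c then (cmod (X r c))\<^sup>2 else 0) + (cmod (X r (Suc m)))\<^sup>2)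
       + (\<Sum>c=1..m. (cmod (X (Suc m) c))\<^sup>2)"
    unfolding off_block_def
    by (simp add: sum.atLeast_Suc_atMost_Suc_shift atLeastAtMostSuc_conv sum.insert)
      (auto intro!: sum.cong)
  also have "\<dots> = off_block m X + 2 * col_above (Suc m) X"
    unfolding off_block_def col_above_def using sym
    by (simp add: sum.distrib atLeastLessThanSuc_atLeastAtMost)
  finally show ?thesis .
qed

lemma sum_remove_two:
  assumes "finite S" "i \<in> S" "j \<in> S" "i \<noteq> j"
  shows "(\<Sum>r\<in>S. g r) = (\<Sum>r\<in>S-{i,j}. g r) + g i + (g j :: real)"
proof -
  have S: "S = insert i (insert j (S-{i,j}))"
    using assms by auto
  show ?thesis
    using assms by (subst S) (simp add: sum.insert)
qed

lemma offdiag_sum_remove_two: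
  assumes "finite S" "i \<in> S" "j \<in> S" "i \<noteq> j"
  shows "(\<Sum>r\<in>S. \<Sum>c\<in>S. if r \<noteq> c then g r c else 0) =
     (\<Sum>r\<in>S-{i,j}. \<Sum>c\<in>S-{i,j}. if r \<noteq> c then g r c else 0)
     + (\<Sum>r\<in>S-{i,j}. g r i + g r j) + (\<Sum>c\<in>S-{i,j}. g i c + g j c) + g i j + (g j i :: real)"
proof -
  define S' where "S' = S - {i,j}"
  have S: "S = insert i (insert j S')" and S': "finite S'" "i \<notin> S'" "j \<notin> S'"
    using assms unfolding S'_def by auto
  have row: "(\<Sum>c\<in>S. if r \<noteq> c then g r c else 0)
      = (\<Sum>c\<in>S'. if r \<noteq> c then g r c else 0) + (g r i + g r j)" if "r \<in> S'" for r
    using S' assms that by (subst S) (auto simp: sum.insert)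
  have row_i: "(\<Sum>c\<in>S. if i \<noteq> c then g i c else 0) = (\<Sum>c\<in>S'. g i c) + g i j"
    using S' assms by (subst S) (auto simp: sum.insert intro!: sum.cong)
  have row_j: "(\<Sum>c\<in>S. if j \<noteq> c then g j c else 0) = (\<Sum>c\<in>S'. g j c) + g j i"
    using S' assms by (subst S) (auto simp: sum.insert intro!: sum.cong)
  have "(\<Sum>r\<in>S. \<Sum>c\<in>S. if r \<noteq> c then g r c else 0) =
      (\<Sum>c\<in>S. if i \<noteq> c then g i c else 0) + (\<Sum>c\<in>S. if j \<noteq> c then g j c else 0)
      + (\<Sum>r\<in>S'. \<Sum>c\<in>S. if r \<noteq> c then g r c else 0)"
    using S' assms by (subst (1) S) (simp add: sum.insert)
  also have "(\<Sum>r\<in>S'. \<Sum>c\<in>S. if r \<noteq> c then g r c else 0) =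
      (\<Sum>r\<in>S'. (\<Sum>c\<in>S'. if r \<noteq> c then g r c else 0) + (g r i + g r j))"
    using row by (intro sum.cong) auto
  finally show ?thesis
    unfolding S'_def[symmetric] row_i row_j by (simp add: sum.distrib)
qed

lemma off_block_rotation:
  fixes X :: cmatrix and n i j :: nat and \<phi> \<alpha> :: real
  defines "X' \<equiv> mmult n (cadj (rot i j \<phi> \<alpha>)) (mmult n X (rot i j \<phi> \<alpha>))"
  assumes "i \<in> {1..m}" "j \<in> {1..m}" "i \<noteq> j" "m \<le> n"
  shows "off_block m X' + (cmod (X i j))\<^sup>2 + (cmod (X j i))\<^sup>2
       = off_block m X + (cmod (X' i j))\<^sup>2 + (cmod (X' j i))\<^sup>2"
proof -
  let ?S' = "{1..m} - {i,j}"
  have ij: "i \<in> {1..n}" "j \<in> {1..n}"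
    using assms by auto
  have inner: "(\<Sum>r\<in>?S'. \<Sum>c\<in>?S'. if r \<noteq> c then (cmod (X' r c))\<^sup>2 else 0)
     = (\<Sum>r\<in>?S'. \<Sum>c\<in>?S'. if r \<noteq> c then (cmod (X r c))\<^sup>2 else 0)"
    unfolding X'_def using assms
    by (intro sum.cong refl) (auto simp: mmult_adj_rot_other mmult_rot_other)
  have cols: "(\<Sum>r\<in>?S'. (cmod (X' r i))\<^sup>2 + (cmod (X' r j))\<^sup>2)
     = (\<Sum>r\<in>?S'. (cmod (X r i))\<^sup>2 + (cmod (X r j))\<^sup>2)"
    unfolding X'_def using assms ij
    by (intro sum.cong refl) (auto simp: mmult_adj_rot_other mmult_rot_i mmult_rot_j rot_pair_norm_right[simplified])
  have rows: "(\<Sum>c\<in>?S'. (cmod (X' i c))\<^sup>2 + (cmod (X' j c))\<^sup>2)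
     = (\<Sum>c\<in>?S'. (cmod (X i c))\<^sup>2 + (cmod (X j c))\<^sup>2)"
    unfolding X'_def using assms ij
    by (intro sum.cong refl) (auto simp: mmult_adj_rot_i mmult_adj_rot_j mmult_rot_other rot_pair_norm_left[simplified])
  show ?thesis
    unfolding off_block_def
    using offdiag_sum_remove_two[of "{1..m}" i j "\<lambda>r c. (cmod (X' r c))\<^sup>2"]
      offdiag_sum_remove_two[of "{1..m}" i j "\<lambda>r c. (cmod (X r c))\<^sup>2"] assms inner cols rows
    by simp
qed

lemma col_above_rotation:
  fixes X :: cmatrix and n i j :: nat and \<phi> \<alpha> :: real
  defines "X' \<equiv> mmult n (cadj (rot i j \<phi> \<alpha>)) (mmult n X (rot i j \<phi> \<alpha>))"
  assumes "i \<in> {1..<J}" "j \<in> {1..<J}" "i \<noteq> j" "J \<le> n"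
  shows "col_above J X' = col_above J X"
proof -
  let ?S' = "{1..<J} - {i,j}"
  have ij: "i \<in> {1..n}" "j \<in> {1..n}" "J \<in> {1..n}" "J \<noteq> i" "J \<noteq> j"
    using assms by auto
  have rest: "(\<Sum>r\<in>?S'. (cmod (X' r J))\<^sup>2) = (\<Sum>r\<in>?S'. (cmod (X r J))\<^sup>2)"
    unfolding X'_def using assms ij
    by (intro sum.cong refl) (auto simp: mmult_adj_rot_other mmult_rot_other)
  have pair: "(cmod (X' i J))\<^sup>2 + (cmod (X' j J))\<^sup>2 = (cmod (X i J))\<^sup>2 + (cmod (X j J))\<^sup>2"
    unfolding X'_def using assms ij
    by (simp add: mmult_adj_rot_i mmult_adj_rot_j mmult_rot_other rot_pair_norm_left[simplified])
  show ?thesis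
    unfolding col_above_def
    using sum_remove_two[of "{1..<J}" i j "\<lambda>r. (cmod (X' r J))\<^sup>2"]
      sum_remove_two[of "{1..<J}" i j "\<lambda>r. (cmod (X r J))\<^sup>2"] assms rest pair
    by simp
qed

section \<open>One sweep of the column-cyclic method\<close>

definition tri :: "nat \<Rightarrow> nat" where
  "tri m = m * (m - 1) div 2"

lemma tri_Suc: "tri (Suc m) = tri m + m"
proof -
  have "Suc m * m = m * (m - 1) + 2 * m"
    by (cases m) auto
  then show ?thesis
    unfolding tri_def by simp
qed

lemma tri_mono: "m \<le> n \<Longrightarrow> tri m \<le> tri n"
  by (induction n) (auto simp: tri_Suc le_Suc_eq)

text \<open>Steps \<open>tri m + l\<close>, \<open>l < m\<close>, form phase \<open>m\<close> of the sweep: its \<open>l\<close>-th step annihilates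
  the entry in row \<open>\<tau> (m + 1) (l + 1)\<close> of column \<open>m + 1\<close>.\<close>

locale column_cyclic_sweep =
  fixes n :: nat and \<nu> :: real and As :: "nat \<Rightarrow> cmatrix" and \<phi> \<alpha> :: "nat \<Rightarrow> real"
    and \<tau> :: "nat \<Rightarrow> nat \<Rightarrow> nat"
  assumes nu_pos: "0 < \<nu>" and nu_le_1: "\<nu> \<le> 1"
    and tau_permutes: "\<And>m. 1 \<le> m \<Longrightarrow> m < n \<Longrightarrow> \<tau> (Suc m) permutes {1..<Suc m}"
    and hermitian_As: "\<And>k. k \<le> tri n \<Longrightarrow> hermitian n (As k)"
    and As_step: "\<And>m l. 1 \<le> m \<Longrightarrow> m < n \<Longrightarrow> l < m \<Longrightarrow>
      As (Suc (tri m + l)) =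
        mmult n (cadj (rot (\<tau> (Suc m) (Suc l)) (Suc m) (\<phi> (tri m + l)) (\<alpha> (tri m + l))))
          (mmult n (As (tri m + l)) (rot (\<tau> (Suc m) (Suc l)) (Suc m) (\<phi> (tri m + l)) (\<alpha> (tri m + l))))"
    and As_pivot_zero: "\<And>m l. 1 \<le> m \<Longrightarrow> m < n \<Longrightarrow> l < m \<Longrightarrow>
      As (Suc (tri m + l)) (\<tau> (Suc m) (Suc l)) (Suc m) = 0"
    and cos_ge_nu: "\<And>m l. 1 \<le> m \<Longrightarrow> m < n \<Longrightarrow> l < m \<Longrightarrow> \<nu> \<le> \<bar>cos (\<phi> (tri m + l))\<bar>"
begin

definition phase :: "nat \<Rightarrow> nat \<Rightarrow> cmatrix" where
  "phase m l = As (tri m + l)"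

definition piv :: "nat \<Rightarrow> nat \<Rightarrow> nat" where
  "piv m l = \<tau> (Suc m) (Suc l)"

definition unpivoted :: "nat \<Rightarrow> nat \<Rightarrow> nat set" where
  "unpivoted m l = {1..m} - piv m ` {..<l}"

lemma phase_0: "phase m 0 = As (tri m)"
  by (simp add: phase_def)

lemma phase_last: "phase m m = As (tri (Suc m))"
  by (simp add: phase_def tri_Suc)

lemma piv_in: "1 \<le> m \<Longrightarrow> m < n \<Longrightarrow> l < m \<Longrightarrow> piv m l \<in> {1..m}"
  using permutes_in_image[OF tau_permutes, of m "Suc l"] unfolding piv_def by auto

lemma piv_inj: "1 \<le> m \<Longrightarrow> m < n \<Longrightarrow> l < m \<Longrightarrow> l' < m \<Longrightarrow> piv m l = piv m l' \<Longrightarrow> l = l'"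
  using permutes_inj[OF tau_permutes, of m] unfolding piv_def inj_def by fastforce

lemma piv_unpivoted:
  assumes "1 \<le> m" "m < n" "l < m"
  shows "piv m l \<in> unpivoted m l"
proof -
  have "piv m l \<noteq> piv m l'" if "l' < l" for l'
    using piv_inj[OF assms, of l'] that assms(3) by auto
  then show ?thesis
    unfolding unpivoted_def using piv_in[OF assms] by auto
qed

lemma unpivoted_SucD: "r \<in> unpivoted m (Suc l) \<Longrightarrow> r \<in> unpivoted m l \<and> r \<noteq> piv m l"
  unfolding unpivoted_def by auto

lemma phase_step:
  "1 \<le> m \<Longrightarrow> m < n \<Longrightarrow> l < m \<Longrightarrow>
   phase m (Suc l) = mmult n (cadj (rot (piv m l) (Suc m) (\<phi> (tri m + l)) (\<alpha> (tri m + l))))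
     (mmult n (phase m l) (rot (piv m l) (Suc m) (\<phi> (tri m + l)) (\<alpha> (tri m + l))))"
  using As_step by (simp add: phase_def piv_def)

lemma phase_hermitian: "m < n \<Longrightarrow> l \<le> m \<Longrightarrow> hermitian n (phase m l)"
  unfolding phase_def using tri_mono[of "Suc m" n] by (intro hermitian_As) (auto simp: tri_Suc)

lemma phase_pivot_zero:
  assumes "1 \<le> m" "m < n" "l < m"
  shows "phase m (Suc l) (piv m l) (Suc m) = 0" "phase m (Suc l) (Suc m) (piv m l) = 0"
proof -
  show zero: "phase m (Suc l) (piv m l) (Suc m) = 0"
    using As_pivot_zero[OF assms] by (simp add: phase_def piv_def)
  have "hermitian n (phase m (Suc l))"
    using assms by (intro phase_hermitian) auto
  moreover have "piv m l \<in> {1..n}" "Suc m \<in> {1..n}"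
    using piv_in[OF assms] assms by auto
  ultimately have "phase m (Suc l) (Suc m) (piv m l) = cnj (phase m (Suc l) (piv m l) (Suc m))"
    unfolding hermitian_def by blast
  then show "phase m (Suc l) (Suc m) (piv m l) = 0"
    using zero by simp
qed

lemma off_block_phase:
  assumes "1 \<le> m" "m < n" "k \<le> m"
  shows "off_block (Suc m) (phase m k) + 2 * (\<Sum>l<k. (cmod (phase m l (piv m l) (Suc m)))\<^sup>2)
    = off_block (Suc m) (phase m 0)"
  using assms(3)
proof (induction k)
  case 0
  then show ?case by simp
next
  case (Suc l)
  then have l: "l < m"
    by simp
  have piv: "piv m l \<in> {1..Suc m}" "piv m l \<noteq> Suc m" "piv m l \<in> {1..n}" "Suc m \<in> {1..n}"
    using piv_in[OF assms(1,2) l] assms by auto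
  have "off_block (Suc m) (phase m (Suc l)) + (cmod (phase m l (piv m l) (Suc m)))\<^sup>2
      + (cmod (phase m l (Suc m) (piv m l)))\<^sup>2 = off_block (Suc m) (phase m l)"
    using off_block_rotation[where i="piv m l" and j="Suc m" and m="Suc m" and n=n and X="phase m l"] piv assms
      phase_pivot_zero[OF assms(1,2) l]
    unfolding phase_step[OF assms(1,2) l] by simp
  moreover have "cmod (phase m l (Suc m) (piv m l)) = cmod (phase m l (piv m l) (Suc m))"
    using hermitian_cmod_sym[OF phase_hermitian] piv l assms by simp
  ultimately show ?case
    using Suc by simp
qed

lemma col_above_phase:
  assumes "1 \<le> m" "m < n" "k \<le> m" "Suc m < J" "J \<le> n"
  shows "col_above J (phase m k) = col_above J (phase m 0)"
  using assms(3)
proof (induction k)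
  case 0
  then show ?case by simp
next
  case (Suc l)
  then have l: "l < m"
    by simp
  have "col_above J (phase m (Suc l)) = col_above J (phase m l)"
    unfolding phase_step[OF assms(1,2) l]
    using col_above_rotation[where i="piv m l" and j="Suc m" and J=J and n=n] piv_in[OF assms(1,2) l] assms by auto
  then show ?case
    using Suc by simp
qed

lemma col_above_before_phase:
  "1 \<le> m \<Longrightarrow> m < J \<Longrightarrow> J \<le> n \<Longrightarrow> col_above J (As (tri m)) = col_above J (As 0)"
proof (induction m rule: dec_induct)
  case base
  then show ?case by (simp add: tri_def)
next
  case (step m)
  have "col_above J (As (tri (Suc m))) = col_above J (phase m 0)"
    using col_above_phase[of m m J] step.hyps step.prems unfolding phase_last by auto
  then show ?case
    using step by (simp add: phase_0)
qed

lemma phase_unpivoted_entry: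
  assumes "1 \<le> m" "m < n"
  shows "l \<le> m \<Longrightarrow> r \<in> unpivoted m l \<Longrightarrow> q \<in> unpivoted m l \<Longrightarrow> phase m l r q = phase m 0 r q"
proof (induction l)
  case 0
  then show ?case by simp
next
  case (Suc l)
  have l: "l < m"
    using Suc by simp
  have r: "r \<in> unpivoted m l" "r \<noteq> piv m l" and q: "q \<in> unpivoted m l" "q \<noteq> piv m l"
    using unpivoted_SucD Suc.prems by auto
  have "r \<in> {1..n}" "r \<noteq> Suc m" "q \<in> {1..n}" "q \<noteq> Suc m"
    using r q assms unfolding unpivoted_def by auto
  then have "phase m (Suc l) r q = phase m l r q"
    unfolding phase_step[OF assms l] using r q by (simp add: mmult_adj_rot_other mmult_rot_other)
  then show ?case
    using Suc.IH l r q by simp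
qed

text \<open>The entries mixed into column \<open>m + 1\<close> lie in rows and columns not yet pivoted, which the
  phase has left untouched; so they are still entries of the block of order \<open>m\<close> at its start.\<close>

lemma phase_col_lower_bound:
  assumes "1 \<le> m" "m < n"
  shows "l \<le> m \<Longrightarrow> r \<in> unpivoted m l \<Longrightarrow>
    \<nu> ^ l * cmod (phase m 0 r (Suc m)) - (\<Sum>l'<l. cmod (phase m 0 r (piv m l')))
      \<le> cmod (phase m l r (Suc m))"
proof (induction l)
  case 0
  then show ?case by simp
next
  case (Suc l)
  have l: "l < m"
    using Suc by simp
  have r: "r \<in> unpivoted m l" "r \<noteq> piv m l"
    using unpivoted_SucD Suc.prems by auto
  have "r \<in> {1..n}" "r \<noteq> Suc m" "piv m l \<noteq> Suc m" "piv m l \<in> {1..n}" "Suc m \<in> {1..n}"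
    using r piv_in[OF assms l] assms unfolding unpivoted_def by auto
  then have entry: "phase m (Suc l) r (Suc m)
      = - exp (\<i> * \<alpha> (tri m + l)) * of_real (sin (\<phi> (tri m + l))) * phase m l r (piv m l)
        + of_real (cos (\<phi> (tri m + l))) * phase m l r (Suc m)"
    unfolding phase_step[OF assms l] using r by (simp add: mmult_adj_rot_other mmult_rot_j)
  have unchanged: "phase m l r (piv m l) = phase m 0 r (piv m l)"
    using phase_unpivoted_entry[OF assms, of l r "piv m l"] l r piv_unpivoted[OF assms l] by simp
  have step: "\<nu> * cmod (phase m l r (Suc m)) - cmod (phase m 0 r (piv m l))
      \<le> cmod (phase m (Suc l) r (Suc m))"
    using rot_entry_lower_bound[OF cos_ge_nu[OF assms l] abs_sin_le_one,
        of "phase m l r (Suc m)" "phase m l r (piv m l)" "\<alpha> (tri m + l)"]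
    by (simp only: entry unchanged)
  define S where "S = (\<Sum>l'<l. cmod (phase m 0 r (piv m l')))"
  have "\<nu> * (\<nu> ^ l * cmod (phase m 0 r (Suc m)) - S) \<le> \<nu> * cmod (phase m l r (Suc m))"
    using Suc.IH l r nu_pos unfolding S_def by (intro mult_left_mono) auto
  moreover have "\<nu> * S \<le> S"
    using nu_le_1 by (intro mult_left_le_one_le) (auto simp: S_def sum_nonneg nu_pos less_imp_le)
  ultimately show ?case
    using step by (simp add: S_def right_diff_distrib)
qed

lemma pivot_lower_bound:
  assumes "1 \<le> m" "m < n" "l < m"
  shows "\<nu> ^ m * cmod (phase m 0 (piv m l) (Suc m))
    \<le> cmod (phase m l (piv m l) (Suc m)) + m * sqrt (off_block m (phase m 0))"
proof -
  have "(\<Sum>l'<l. cmod (phase m 0 (piv m l) (piv m l'))) \<le> (\<Sum>l'<l. sqrt (off_block m (phase m 0)))"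
  proof (intro sum_mono)
    fix l' assume "l' \<in> {..<l}"
    then have "l' < m" "piv m l \<noteq> piv m l'"
      using piv_inj[OF assms, of l'] assms(3) by auto
    then show "cmod (phase m 0 (piv m l) (piv m l')) \<le> sqrt (off_block m (phase m 0))"
      using piv_in[OF assms(1,2)] assms by (intro cmod_le_sqrt_off_block) auto
  qed
  also have "\<dots> \<le> m * sqrt (off_block m (phase m 0))"
    using assms by (simp add: mult_right_mono off_block_nonneg)
  finally have mixed: "(\<Sum>l'<l. cmod (phase m 0 (piv m l) (piv m l')))
      \<le> m * sqrt (off_block m (phase m 0))" .
  have "\<nu> ^ m * cmod (phase m 0 (piv m l) (Suc m)) \<le> \<nu> ^ l * cmod (phase m 0 (piv m l) (Suc m))"
    using assms nu_pos nu_le_1 by (intro mult_right_mono power_decreasing) auto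
  moreover have "\<nu> ^ l * cmod (phase m 0 (piv m l) (Suc m)) - (\<Sum>l'<l. cmod (phase m 0 (piv m l) (piv m l')))
      \<le> cmod (phase m l (piv m l) (Suc m))"
    using phase_col_lower_bound[OF assms(1,2)] piv_unpivoted[OF assms] assms(3) by simp
  ultimately show ?thesis
    using mixed by linarith
qed

lemma col_above_reindex_piv:
  assumes "1 \<le> m" "m < n"
  shows "col_above (Suc m) X = (\<Sum>l<m. (cmod (X (piv m l) (Suc m)))\<^sup>2)"
proof -
  have "bij_betw Suc {..<m} {1..<Suc m}"
    unfolding bij_betw_def by (simp add: image_Suc_lessThan atLeastLessThanSuc_atLeastAtMost)
  from bij_betw_trans[OF this permutes_imp_bij[OF tau_permutes[OF assms]]]
  have "bij_betw (piv m) {..<m} {1..<Suc m}"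
    unfolding piv_def by (simp add: comp_def)
  then show ?thesis
    unfolding col_above_def by (rule sum.reindex_bij_betw[symmetric])
qed

lemma col_above_phase_bound:
  assumes "1 \<le> m" "m < n"
  shows "\<nu> ^ (2 * m) * col_above (Suc m) (phase m 0)
    \<le> 2 * (\<Sum>l<m. (cmod (phase m l (piv m l) (Suc m)))\<^sup>2) + 2 * real m ^ 3 * off_block m (phase m 0)"
proof -
  let ?b = "off_block m (phase m 0)"
  have term_bound: "\<nu> ^ (2 * m) * (cmod (phase m 0 (piv m l) (Suc m)))\<^sup>2
      \<le> 2 * (cmod (phase m l (piv m l) (Suc m)))\<^sup>2 + 2 * real m ^ 2 * ?b"
    if l: "l < m" for l
  proof -
    let ?x = "\<nu> ^ m * cmod (phase m 0 (piv m l) (Suc m))"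
    let ?y = "cmod (phase m l (piv m l) (Suc m))"
    let ?z = "real m * sqrt ?b"
    have "?x\<^sup>2 \<le> (?y + ?z)\<^sup>2"
      using pivot_lower_bound[OF assms l] nu_pos by (intro power_mono) auto
    also have "\<dots> \<le> 2 * ?y\<^sup>2 + 2 * ?z\<^sup>2"
      using sum_squares_bound[of ?y ?z] by (simp add: power2_eq_square algebra_simps)
    also have "?z\<^sup>2 = real m ^ 2 * ?b"
      using off_block_nonneg by (simp add: power_mult_distrib)
    finally show ?thesis
      by (simp add: power_mult_distrib power_even_eq)
  qed
  have "\<nu> ^ (2 * m) * col_above (Suc m) (phase m 0)
      = (\<Sum>l<m. \<nu> ^ (2 * m) * (cmod (phase m 0 (piv m l) (Suc m)))\<^sup>2)"
    unfolding col_above_reindex_piv[OF assms] by (simp add: sum_distrib_left)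
  also have "\<dots> \<le> (\<Sum>l<m. 2 * (cmod (phase m l (piv m l) (Suc m)))\<^sup>2 + 2 * real m ^ 2 * ?b)"
    using term_bound by (intro sum_mono) auto
  also have "\<dots> = 2 * (\<Sum>l<m. (cmod (phase m l (piv m l) (Suc m)))\<^sup>2) + 2 * real m ^ 3 * ?b"
    by (simp add: sum.distrib sum_distrib_left power3_eq_cube power2_eq_square algebra_simps)
  finally show ?thesis .
qed

lemma off_block_after_phase:
  assumes "1 \<le> m" "m < n"
  shows "off_block (Suc m) (As (tri (Suc m))) + 2 * (\<Sum>l<m. (cmod (phase m l (piv m l) (Suc m)))\<^sup>2)
    = off_block m (As (tri m)) + 2 * col_above (Suc m) (As 0)"
proof -
  have "off_block (Suc m) (As (tri m)) = off_block m (As (tri m)) + 2 * col_above (Suc m) (As (tri m))"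
    using off_block_Suc[OF phase_hermitian[of m 0]] assms by (simp add: phase_0)
  then show ?thesis
    using off_block_phase[OF assms le_refl] col_above_before_phase[of m "Suc m"] assms
    by (simp add: phase_0 phase_last)
qed

end

fun sweep_gap :: "real \<Rightarrow> nat \<Rightarrow> real" where
  "sweep_gap \<nu> 0 = 1"
| "sweep_gap \<nu> (Suc m) = (if m = 0 then 1 else sweep_gap \<nu> m * \<nu> ^ (2 * m) / (8 * real m ^ 3))"

lemma sweep_gap_pos: "0 < \<nu> \<Longrightarrow> 0 < sweep_gap \<nu> m"
  by (induction m) auto

lemma sweep_gap_le_1:
  assumes "0 < \<nu>" "\<nu> \<le> 1"
  shows "sweep_gap \<nu> m \<le> 1"
proof (induction m)
  case (Suc m)
  show ?case
  proof (cases "m = 0")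
    case False
    have "\<nu> ^ (2 * m) \<le> 1"
      using assms by (simp add: power_le_one)
    moreover have "1 \<le> real m ^ 3"
      using False by (simp add: one_le_power)
    ultimately have "\<nu> ^ (2 * m) / (8 * real m ^ 3) \<le> 1"
      by (simp add: divide_le_eq)
    then have "sweep_gap \<nu> m * (\<nu> ^ (2 * m) / (8 * real m ^ 3)) \<le> 1 * 1"
      using Suc.IH sweep_gap_pos[OF assms(1), of m] assms by (intro mult_mono) auto
    then show ?thesis
      using False by simp
  qed simp
qed simp

text \<open>The inductive step in numbers: \<open>b \<le> (1 - d) b\<^sub>0\<close> bounds the leading block before the phase,
  \<open>q C \<le> 2 P + 2 K b\<close> bounds the next column \<open>C\<close> by the pivots \<open>P\<close> of the phase, and
  \<open>F + 2 P = b + 2 C\<close> is the energy balance for the final block \<open>F\<close>. Trading the fraction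
  \<open>d / (4 K)\<close> of the decrease \<open>2 P\<close> against the column gives the contraction.\<close>

lemma contraction_combine:
  fixes d q K b b0 C P F :: real
  assumes "0 < d" "d \<le> 1" "0 < q" "q \<le> 1" "1 \<le> K" "0 \<le> b" "0 \<le> b0" "b \<le> (1 - d) * b0"
    "0 \<le> C" "0 \<le> P" "q * C \<le> 2 * P + 2 * K * b" "F + 2 * P = b + 2 * C"
  shows "F \<le> (1 - d * q / (8 * K)) * (b0 + 2 * C)"
proof -
  define \<theta> where "\<theta> = d / (4 * K)"
  have \<theta>: "0 < \<theta>" "\<theta> \<le> 1"
    using assms unfolding \<theta>_def by (auto simp: divide_le_eq)
  have "F = b + 2 * C - 2 * P"
    using assms by simp
  also have "\<dots> \<le> b + 2 * C - \<theta> * (2 * P)"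
    using \<theta> assms by (simp add: mult_left_le_one_le)
  also have "\<dots> \<le> b + 2 * C - \<theta> * (q * C - 2 * K * b)"
    using \<theta> assms by (smt (verit) mult_left_mono)
  also have "\<dots> = (1 + 2 * \<theta> * K) * b + (2 - \<theta> * q) * C"
    by (simp add: algebra_simps)
  also have "2 * \<theta> * K = d / 2"
    using assms unfolding \<theta>_def by simp
  also have "\<theta> * q = 2 * (d * q / (8 * K))"
    unfolding \<theta>_def by simp
  finally have F: "F \<le> (1 + d / 2) * b + (2 - 2 * (d * q / (8 * K))) * C" .
  have "(1 + d / 2) * b \<le> (1 + d / 2) * ((1 - d) * b0)"
    using assms by (intro mult_left_mono) auto
  also have "\<dots> \<le> (1 - d / 2) * b0"
  proof -
    have "(1 + d / 2) * (1 - d) \<le> 1 - d / 2"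
      using assms by (simp add: algebra_simps power2_eq_square)
    then show ?thesis
      using assms by (simp add: mult.assoc[symmetric] mult_right_mono)
  qed
  also have "\<dots> \<le> (1 - d * q / (8 * K)) * b0"
  proof -
    have "d * q \<le> d / 2 * (8 * K)"
      using assms mult_left_mono[of q 1 d] by simp
    then have "d * q / (8 * K) \<le> d / 2"
      using assms by (simp add: divide_le_eq)
    then show ?thesis
      using assms by (intro mult_right_mono) auto
  qed
  finally have "(1 + d / 2) * b \<le> (1 - d * q / (8 * K)) * b0" .
  moreover have "(1 - x) * (b0 + 2 * C) = (1 - x) * b0 + (2 - 2 * x) * C" for x
    by (simp add: algebra_simps)
  ultimately show ?thesis
    using F by (metis add_right_mono order_trans)
qed

context column_cyclic_sweep
begin

lemma off_block_sweep:
  "1 \<le> m \<Longrightarrow> m \<le> n \<Longrightarrow> off_block m (As (tri m)) \<le> (1 - sweep_gap \<nu> m) * off_block m (As 0)"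
proof (induction m rule: dec_induct)
  case base
  then show ?case by (simp add: off_block_def)
next
  case (step m)
  then have m: "1 \<le> m" "m < n"
    by auto
  have "off_block (Suc m) (As (tri (Suc m)))
      \<le> (1 - sweep_gap \<nu> m * \<nu> ^ (2 * m) / (8 * real m ^ 3))
        * (off_block m (As 0) + 2 * col_above (Suc m) (As 0))"
  proof (rule contraction_combine)
    show "\<nu> ^ (2 * m) * col_above (Suc m) (As 0)
      \<le> 2 * (\<Sum>l<m. (cmod (phase m l (piv m l) (Suc m)))\<^sup>2) + 2 * real m ^ 3 * off_block m (As (tri m))"
      using col_above_phase_bound[OF m] col_above_before_phase[of m "Suc m"] m by (simp add: phase_0)
  qed (use off_block_after_phase[OF m] step m nu_pos nu_le_1 in
      \<open>auto simp: sweep_gap_pos sweep_gap_le_1 power_le_one one_le_power off_block_nonneg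
         col_above_nonneg sum_nonneg\<close>)
  then show ?case
    using m off_block_Suc[OF hermitian_As[of 0]] by simp
qed

end

section \<open>Column-wise orderings\<close>

definition column_ordering :: "(nat \<Rightarrow> nat \<Rightarrow> nat) \<Rightarrow> nat \<Rightarrow> (nat \<times> nat) list" where
  "column_ordering \<tau> N = concat (map (\<lambda>j. map (\<lambda>i. (\<tau> j i, j)) [1..<j]) [2..<Suc N])"

lemma column_ordering_Suc:
  "1 \<le> N \<Longrightarrow> column_ordering \<tau> (Suc N) = column_ordering \<tau> N @ map (\<lambda>i. (\<tau> (Suc N) i, Suc N)) [1..<Suc N]"
  unfolding column_ordering_def by simp

lemma length_column_ordering: "length (column_ordering \<tau> N) = tri N"
proof (induction N)
  case 0
  then show ?case by (simp add: column_ordering_def tri_def)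
next
  case (Suc N)
  show ?case
  proof (cases "N = 0")
    case True
    then show ?thesis by (simp add: column_ordering_def tri_def)
  next
    case False
    then show ?thesis
      using Suc by (simp add: column_ordering_Suc tri_Suc)
  qed
qed

lemma nth_column_ordering:
  "1 \<le> m \<Longrightarrow> m < N \<Longrightarrow> l < m \<Longrightarrow> column_ordering \<tau> N ! (tri m + l) = (\<tau> (Suc m) (Suc l), Suc m)"
proof (induction N)
  case 0
  then show ?case by simp
next
  case (Suc N)
  then have N: "1 \<le> N"
    by simp
  show ?case
  proof (cases "m < N")
    case True
    have "tri m + l < tri (Suc m)"
      using Suc.prems by (simp add: tri_Suc)
    also have "\<dots> \<le> tri N"
      using True by (intro tri_mono) simp
    finally have "tri m + l < length (column_ordering \<tau> N)"
      by (simp add: length_column_ordering)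
    then show ?thesis
      using Suc True N by (simp add: column_ordering_Suc nth_append)
  next
    case False
    then have "m = N"
      using Suc.prems by simp
    then show ?thesis
      using N Suc.prems
      by (simp add: column_ordering_Suc nth_append length_column_ordering nth_upt del: upt_Suc)
  qed
qed

lemma col_orderings_column_ordering:
  assumes "ord \<in> col_orderings n" "2 \<le> n"
  obtains \<tau> where "ord = column_ordering \<tau> n"
    and "\<And>m. 1 \<le> m \<Longrightarrow> m < n \<Longrightarrow> \<tau> (Suc m) permutes {1..<Suc m}"
proof -
  obtain \<tau>0 where ord: "ord = (1,2) # concat (map (\<lambda>j. map (\<lambda>i. (\<tau>0 j i, j)) [1..<j]) [3..<Suc n])"
    and perm: "\<forall>j\<in>{3..n}. \<tau>0 j permutes {1..<j}"
    using assms(1) unfolding col_orderings_def by blast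
  define \<tau> where "\<tau> j = (if j = 2 then id else \<tau>0 j)" for j
  have "[2..<Suc n] = 2 # [3..<Suc n]"
    using assms(2) by (simp add: upt_rec)
  then have "column_ordering \<tau> n
      = map (\<lambda>i. (\<tau> 2 i, 2)) [1..<2] @ concat (map (\<lambda>j. map (\<lambda>i. (\<tau> j i, j)) [1..<j]) [3..<Suc n])"
    unfolding column_ordering_def by simp
  also have "map (\<lambda>i. (\<tau> 2 i, 2)) [1..<2] = [(1, 2)]"
    by (simp add: \<tau>_def upt_rec)
  also have "map (\<lambda>j. map (\<lambda>i. (\<tau> j i, j)) [1..<j]) [3..<Suc n]
      = map (\<lambda>j. map (\<lambda>i. (\<tau>0 j i, j)) [1..<j]) [3..<Suc n]"
    unfolding \<tau>_def by (intro map_cong) auto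
  also have "[(1, 2)] @ concat (map (\<lambda>j. map (\<lambda>i. (\<tau>0 j i, j)) [1..<j]) [3..<Suc n]) = ord"
    unfolding ord by simp
  finally have "ord = column_ordering \<tau> n" ..
  moreover have "\<tau> (Suc m) permutes {1..<Suc m}" if "1 \<le> m" "m < n" for m
    using perm that by (cases "m = 1") (auto simp: \<tau>_def permutes_id)
  ultimately show ?thesis
    using that by blast
qed

section \<open>One cycle of the Jacobi method\<close>

lemma hermitian_congruence_iterate:
  assumes "hermitian n (As 0)"
    and "\<And>k. k < K \<Longrightarrow> \<exists>U. As (Suc k) = mmult n (cadj U) (mmult n (As k) U)"
  shows "k \<le> K \<Longrightarrow> hermitian n (As k)"
proof (induction k)
  case 0
  then show ?case using assms(1) by simp
next
  case (Suc k)
  then obtain U where "As (Suc k) = mmult n (cadj U) (mmult n (As k) U)"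
    using assms(2)[of k] by auto
  then show ?case
    using hermitian_congruence Suc by simp
qed

lemma jacobi_one_cycle_off_block:
  assumes "2 \<le> n" "0 < \<nu>" "hermitian n A" "ord \<in> col_orderings n"
    and "jacobi_one_cycle n ord \<nu> A A'"
  shows "off_block n A' \<le> (1 - sweep_gap \<nu> n) * off_block n A"
proof -
  obtain \<tau> where ord: "ord = column_ordering \<tau> n"
    and perm: "\<And>m. 1 \<le> m \<Longrightarrow> m < n \<Longrightarrow> \<tau> (Suc m) permutes {1..<Suc m}"
    using col_orderings_column_ordering[OF assms(4,1)] by blast
  obtain As :: "nat \<Rightarrow> cmatrix" and \<phi> \<alpha> :: "nat \<Rightarrow> real" where
    A: "As 0 = A" and A': "A' = As (tri n)" and
    steps: "\<And>k. k < tri n \<Longrightarrow>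
      As (Suc k) = mmult n (cadj (rot (fst (ord ! k)) (snd (ord ! k)) (\<phi> k) (\<alpha> k)))
        (mmult n (As k) (rot (fst (ord ! k)) (snd (ord ! k)) (\<phi> k) (\<alpha> k))) \<and>
      As (Suc k) (fst (ord ! k)) (snd (ord ! k)) = 0 \<and> \<nu> \<le> \<bar>cos (\<phi> k)\<bar>"
    using assms(5) unfolding jacobi_one_cycle_def tri_def Let_def by blast
  have in_phase: "tri m + l < tri n" if "1 \<le> m" "m < n" "l < m" for m l
    using that tri_mono[of "Suc m" n] by (simp add: tri_Suc)
  have "1 \<le> tri n"
    using tri_mono[OF assms(1)] by (simp add: tri_def)
  then have "\<nu> \<le> 1"
    using steps[of 0] abs_cos_le_one[of "\<phi> 0"] by linarith
  have step: "As (Suc (tri m + l))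
        = mmult n (cadj (rot (\<tau> (Suc m) (Suc l)) (Suc m) (\<phi> (tri m + l)) (\<alpha> (tri m + l))))
          (mmult n (As (tri m + l)) (rot (\<tau> (Suc m) (Suc l)) (Suc m) (\<phi> (tri m + l)) (\<alpha> (tri m + l))))
      \<and> As (Suc (tri m + l)) (\<tau> (Suc m) (Suc l)) (Suc m) = 0 \<and> \<nu> \<le> \<bar>cos (\<phi> (tri m + l))\<bar>"
    if "1 \<le> m" "m < n" "l < m" for m l
    using steps[OF in_phase[OF that]] unfolding ord nth_column_ordering[OF that] prod.sel .
  interpret column_cyclic_sweep n \<nu> As \<phi> \<alpha> \<tau>
  proof
    show "hermitian n (As k)" if "k \<le> tri n" for k
      using hermitian_congruence_iterate[of n As "tri n" k] assms(3) A steps that by blast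
  qed (use assms(2) \<open>\<nu> \<le> 1\<close> perm step in \<open>blast+\<close>)
  show ?thesis
    using off_block_sweep[of n] assms(1) A A' by simp
qed

theorem theorem3p1:
  fixes n :: nat and \<nu> :: real
  assumes "n \<ge> 2" and "\<nu> > 0"
  shows "\<exists>\<gamma>::real. 0 \<le> \<gamma> \<and> \<gamma> < 1 \<and>
           (\<forall>A A' ord. hermitian n A \<longrightarrow> ord \<in> col_orderings n \<longrightarrow>
              jacobi_one_cycle n ord \<nu> A A' \<longrightarrow>
              (off_norm n A')\<^sup>2 \<le> \<gamma> * (off_norm n A)\<^sup>2)"
proof (intro exI conjI allI impI)
  \<comment> \<open>The \<open>max\<close> only matters for \<open>\<nu> > 1\<close>, where no cycle exists.\<close>
  show "0 \<le> max 0 (1 - sweep_gap \<nu> n)" and "max 0 (1 - sweep_gap \<nu> n) < 1"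
    using sweep_gap_pos[OF assms(2)] by auto
  fix A A' ord
  assume "hermitian n A" "ord \<in> col_orderings n" "jacobi_one_cycle n ord \<nu> A A'"
  then have "off_block n A' \<le> (1 - sweep_gap \<nu> n) * off_block n A"
    using jacobi_one_cycle_off_block assms by blast
  also have "\<dots> \<le> max 0 (1 - sweep_gap \<nu> n) * off_block n A"
    by (intro mult_right_mono) (auto simp: off_block_nonneg)
  finally show "(off_norm n A')\<^sup>2 \<le> max 0 (1 - sweep_gap \<nu> n) * (off_norm n A)\<^sup>2"
    by (simp add: off_norm_sq)
qed

end
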